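(* Let $G$ be a network with two source nodes $s_x,s_y$ and terminal set $\mathcal T$, and let $(X,Y)\sim p_{X,Y}$ be generated i.i.d. at $s_x,s_y$. If $H(K_{X,Y})=I(X;Y)$, then whenever the multicast problem $(G,p_{X,Y})$ is feasible (i.e. $H(X\mid Y)\le\rho_G(s_x)$, $H(Y\mid X)\le\rho_G(s_y)$, $H(X,Y)\le\rho_G(s_x,s_y)$), it is feasible by source decomposition.
   Context: A network is an acyclic directed graph with integer edge capacities and a set of terminals $\mathcal T$; $\rho(A;t)$ is the min-cut value from node set $A$ to terminal $t$, and $\rho_G(s_x)=\min_{t}\rho(s_x;t)$, $\rho_G(s_y)=\min_t\rho(s_y;t)$, $\rho_G(s_x,s_y)=\min_t\rho(\{s_x,s_y\};t)$. Every terminal must recover both $X$ and $Y$. $K_{X,Y}$ is the Gács–Körner common information: the index of the connected component containing $(X,Y)$ of the bipartite graph on $\mathcal X\cup\mathcal Y$ with an edge $x$–$y$ iff $p_{X,Y}(x,y)>0$. Source decomposition writes $X\leftrightarrow (X',K_{X,Y})$, $Y\leftrightarrow(Y',K_{X,Y})$ bijectively ($X'$ = index of $X$'s value within its component). Feasible by source decomposition means: in the expanded network obtained by adding nodes $s_{X'},s_{Y'},s_K$ with infinite-capacity edges $s_{X'}\to s_x$, $s_{Y'}\to s_y$, $s_K\to s_x$, $s_K\to s_y$, multicasting independent sources at $s_{X'},s_{Y'},s_K$ with rates $H(X\mid K_{X,Y}),H(Y\mid K_{X,Y}),H(K_{X,Y})$ to all terminals is feasible, i.e. for every nonempty subset $S$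 of these three nodes the sum of their rates is at most the minimum over terminals of the min-cut from $S$ in the expanded network. *)

theory Defs
  imports "HOL-Probability.Probability_Mass_Function"
begin

text \<open>A network: finite node set V, capacity function (0 = no edge).
  Edges of the network are the pairs of nodes in V with positive capacity.\<close>

definition acyclic_network :: "'v set \<Rightarrow> ('v \<Rightarrow> 'v \<Rightarrow> nat) \<Rightarrow> bool" where
  "acyclic_network V cap \<longleftrightarrow> acyclic {(u, w). u \<in> V \<and> w \<in> V \<and> cap u w > 0}"

definition cut_value :: "'v set \<Rightarrow> ('v \<Rightarrow> 'v \<Rightarrow> ennreal) \<Rightarrow> 'v set \<Rightarrow> ennreal" where
  "cut_value V c S = (\<Sum>u\<in>S. \<Sum>w\<in>V - S. c u w)"

text \<open>min-cut value rho(A; t) from node set A to node t (infinite if no cut exists).\<close>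
definition mincut :: "'v set \<Rightarrow> ('v \<Rightarrow> 'v \<Rightarrow> ennreal) \<Rightarrow> 'v set \<Rightarrow> 'v \<Rightarrow> ennreal" where
  "mincut V c A t = (INF S \<in> {S. A \<subseteq> S \<and> S \<subseteq> V \<and> t \<notin> S}. cut_value V c S)"

definition rho :: "'v set \<Rightarrow> ('v \<Rightarrow> 'v \<Rightarrow> ennreal) \<Rightarrow> 'v set \<Rightarrow> 'v set \<Rightarrow> ennreal" where
  "rho V c T A = (INF t \<in> T. mincut V c A t)"

definition ecap :: "('v \<Rightarrow> 'v \<Rightarrow> nat) \<Rightarrow> 'v \<Rightarrow> 'v \<Rightarrow> ennreal" where
  "ecap cap u w = ennreal (real (cap u w))"

datatype 'v exnode = Orig 'v | SrcX' | SrcY' | SrcK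

definition ex_nodes :: "'v set \<Rightarrow> 'v exnode set" where
  "ex_nodes V = Orig ` V \<union> {SrcX', SrcY', SrcK}"

fun ex_cap :: "('v \<Rightarrow> 'v \<Rightarrow> nat) \<Rightarrow> 'v \<Rightarrow> 'v \<Rightarrow> 'v exnode \<Rightarrow> 'v exnode \<Rightarrow> ennreal" where
  "ex_cap cap sx sy (Orig u) (Orig w) = ecap cap u w"
| "ex_cap cap sx sy SrcX' (Orig w) = (if w = sx then \<infinity> else 0)"
| "ex_cap cap sx sy SrcY' (Orig w) = (if w = sy then \<infinity> else 0)"
| "ex_cap cap sx sy SrcK (Orig w) = (if w = sx \<or> w = sy then \<infinity> else 0)"
| "ex_cap cap sx sy _ _ = 0"

definition ent :: "'c pmf \<Rightarrow> real" where
  "ent q = - (\<Sum>z\<in>set_pmf q. pmf q z * log 2 (pmf q z))"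

definition H_XY :: "('a \<times> 'b) pmf \<Rightarrow> real" where "H_XY p = ent p"
definition H_X :: "('a \<times> 'b) pmf \<Rightarrow> real" where "H_X p = ent (map_pmf fst p)"
definition H_Y :: "('a \<times> 'b) pmf \<Rightarrow> real" where "H_Y p = ent (map_pmf snd p)"
definition H_X_given_Y :: "('a \<times> 'b) pmf \<Rightarrow> real" where "H_X_given_Y p = H_XY p - H_Y p"
definition H_Y_given_X :: "('a \<times> 'b) pmf \<Rightarrow> real" where "H_Y_given_X p = H_XY p - H_X p"
definition mutual_info :: "('a \<times> 'b) pmf \<Rightarrow> real" where
  "mutual_info p = H_X p + H_Y p - H_XY p"

definition gk_conn :: "('a \<times> 'b) pmf \<Rightarrow> (('a + 'b) \<times> ('a + 'b)) set" where
  "gk_conn p = (let E = {(Inl x, Inr y) | x y. pmf p (x, y) > 0} in (E \<union> E\<inverse>)\<^sup>*)"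

text \<open>K_{X,Y}: the connected component containing (X,Y) (the component itself serves as its index).\<close>
definition gk_K :: "('a \<times> 'b) pmf \<Rightarrow> 'a \<times> 'b \<Rightarrow> ('a + 'b) set" where
  "gk_K p xy = gk_conn p `` {Inl (fst xy)}"

definition H_K :: "('a \<times> 'b) pmf \<Rightarrow> real" where
  "H_K p = ent (map_pmf (gk_K p) p)"
definition H_X_given_K :: "('a \<times> 'b) pmf \<Rightarrow> real" where
  "H_X_given_K p = ent (map_pmf (\<lambda>z. (fst z, gk_K p z)) p) - H_K p"
definition H_Y_given_K :: "('a \<times> 'b) pmf \<Rightarrow> real" where
  "H_Y_given_K p = ent (map_pmf (\<lambda>z. (snd z, gk_K p z)) p) - H_K p"

definition multicast_feasible ::
  "'v set \<Rightarrow> ('v \<Rightarrow> 'v \<Rightarrow> nat) \<Rightarrow> 'v set \<Rightarrow> 'v \<Rightarrow> 'v \<Rightarrow> ('a \<times> 'b) pmf \<Rightarrow> bool" where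
  "multicast_feasible V cap T sx sy p \<longleftrightarrow>
     ennreal (H_X_given_Y p) \<le> rho V (ecap cap) T {sx} \<and>
     ennreal (H_Y_given_X p) \<le> rho V (ecap cap) T {sy} \<and>
     ennreal (H_XY p) \<le> rho V (ecap cap) T {sx, sy}"

definition decomp_rate :: "('a \<times> 'b) pmf \<Rightarrow> 'v exnode \<Rightarrow> real" where
  "decomp_rate p s = (case s of SrcX' \<Rightarrow> H_X_given_K p | SrcY' \<Rightarrow> H_Y_given_K p
                        | SrcK \<Rightarrow> H_K p | Orig _ \<Rightarrow> 0)"

definition feasible_by_source_decomposition ::
  "'v set \<Rightarrow> ('v \<Rightarrow> 'v \<Rightarrow> nat) \<Rightarrow> 'v set \<Rightarrow> 'v \<Rightarrow> 'v \<Rightarrow> ('a \<times> 'b) pmf \<Rightarrow> bool" where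
  "feasible_by_source_decomposition V cap T sx sy p \<longleftrightarrow>
     (\<forall>S. S \<subseteq> {SrcX', SrcY', SrcK} \<and> S \<noteq> {} \<longrightarrow>
        ennreal (\<Sum>s\<in>S. decomp_rate p s)
          \<le> rho (ex_nodes V) (ex_cap cap sx sy) (Orig ` T) S)"

end

theory Submission
  imports Defs
begin

text \<open>Since K is a function of X and also (on the support) of Y, H(X|K) = H(X) - H(K) and
  H(Y|K) = H(Y) - H(K). Under H(K) = I(X;Y) these become H(X|Y) and H(Y|X), and the three
  decomposition rates add up to H(X,Y). In the expanded network a cut separating a set S of
  virtual sources from a terminal is either infinite or a cut in G separating the original
  sources that S feeds, so each constraint of the decomposed problem is implied by one of the
  three Slepian--Wolf conditions: S = {X'} and S = {Y'} give exactly the first two, and any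
  other S feeds both sources and asks for at most the total rate H(X,Y).\<close>

lemma pmf_map_finite_sum:
  assumes "finite (set_pmf q)"
  shows "pmf (map_pmf f q) y = (\<Sum>z\<in>{z\<in>set_pmf q. f z = y}. pmf q z)"
proof -
  have "pmf (map_pmf f q) y = measure q (f -` {y} \<inter> set_pmf q)"
    by (simp add: pmf_map measure_Int_set_pmf)
  also have "\<dots> = (\<Sum>z\<in>f -` {y} \<inter> set_pmf q. pmf q z)"
    using assms by (intro measure_measure_pmf_finite) auto
  also have "f -` {y} \<inter> set_pmf q = {z\<in>set_pmf q. f z = y}" by auto
  finally show ?thesis .
qed

lemma ent_map_pmf:
  assumes "finite (set_pmf q)"
  shows "ent (map_pmf f q) = - (\<Sum>z\<in>set_pmf q. pmf q z * log 2 (pmf (map_pmf f q) (f z)))"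
proof -
  let ?P = "pmf (map_pmf f q)"
  have "(\<Sum>y\<in>set_pmf (map_pmf f q). ?P y * log 2 (?P y))
      = (\<Sum>y\<in>f ` set_pmf q. \<Sum>z\<in>{z\<in>set_pmf q. f z = y}. pmf q z * log 2 (?P (f z)))"
    by (auto simp: pmf_map_finite_sum[OF assms] sum_distrib_right intro!: sum.cong)
  also have "\<dots> = (\<Sum>z\<in>set_pmf q. pmf q z * log 2 (?P (f z)))"
    using sum.image_gen[OF assms, of "\<lambda>z. pmf q z * log 2 (?P (f z))" f] by simp
  finally show ?thesis unfolding ent_def by simp
qed

lemma ent_nonneg: "ent q \<ge> 0"
proof -
  have "pmf q z * log 2 (pmf q z) \<le> 0" if "z \<in> set_pmf q" for z
    using that pmf_le_1[of q z] by (simp add: pmf_positive mult_nonneg_nonpos)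
  then show ?thesis unfolding ent_def by (simp add: sum_nonpos)
qed

lemma ent_map_pmf_le:
  assumes "finite (set_pmf q)"
  shows "ent (map_pmf f q) \<le> ent q"
proof -
  have "pmf q z * log 2 (pmf q z) \<le> pmf q z * log 2 (pmf (map_pmf f q) (f z))"
    if z: "z \<in> set_pmf q" for z
  proof -
    have pos: "pmf q z > 0" using z by (simp add: pmf_positive)
    have "pmf q z = measure q {z}" by (simp add: measure_pmf_single)
    also have "\<dots> \<le> measure q (f -` {f z})" by (intro measure_pmf.finite_measure_mono) auto
    also have "\<dots> = pmf (map_pmf f q) (f z)" by (simp add: pmf_map)
    finally show ?thesis using pos by (intro mult_left_mono) auto
  qed
  then show ?thesis unfolding ent_map_pmf[OF assms] ent_def[of q] by (simp add: sum_mono)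
qed

lemma ent_map_pmf_inj:
  assumes "finite (set_pmf q)" "inj_on f (set_pmf q)"
  shows "ent (map_pmf f q) = ent q"
  unfolding ent_map_pmf[OF assms(1)] ent_def[of q] by (simp add: pmf_map_inj[OF assms(2)])

lemma ent_map_pmf_graph:
  assumes "finite (set_pmf q)"
  shows "ent (map_pmf (\<lambda>z. (f z, g (f z))) q) = ent (map_pmf f q)"
proof -
  have "map_pmf (\<lambda>z. (f z, g (f z))) q = map_pmf (\<lambda>x. (x, g x)) (map_pmf f q)"
    by (simp add: pmf.map_comp o_def)
  also have "ent \<dots> = ent (map_pmf f q)"
    using assms by (intro ent_map_pmf_inj) (auto simp: inj_on_def)
  finally show ?thesis .
qed

lemma gk_K_eq_component_of_snd:
  assumes "z \<in> set_pmf p"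
  shows "gk_K p z = gk_conn p `` {Inr (snd z)}"
proof -
  define E :: "(('a + 'b) \<times> ('a + 'b)) set" where "E = {(Inl x, Inr y) | x y. pmf p (x, y) > 0}"
  have conn: "gk_conn p = (E \<union> E\<inverse>)\<^sup>*" by (simp add: gk_conn_def E_def Let_def)
  have "sym (gk_conn p)" unfolding conn by (intro sym_rtrancl) (auto simp: sym_def)
  moreover have "trans (gk_conn p)" unfolding conn by (rule trans_rtrancl)
  moreover have "(Inl (fst z), Inr (snd z)) \<in> gk_conn p"
    using assms unfolding conn E_def by (cases z) (auto simp: pmf_positive)
  ultimately show ?thesis unfolding gk_K_def sym_def trans_def by blast
qed

lemma H_X_given_K_eq:
  assumes "finite (set_pmf p)"
  shows "H_X_given_K p = H_X p - H_K p"
proof -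
  have "map_pmf (\<lambda>z. (fst z, gk_K p z)) p
      = map_pmf (\<lambda>z. (fst z, (\<lambda>x. gk_conn p `` {Inl x}) (fst z))) p"
    by (simp add: gk_K_def)
  then show ?thesis
    using ent_map_pmf_graph[OF assms] by (simp add: H_X_given_K_def H_X_def)
qed

lemma H_Y_given_K_eq:
  assumes "finite (set_pmf p)"
  shows "H_Y_given_K p = H_Y p - H_K p"
proof -
  have "map_pmf (\<lambda>z. (snd z, gk_K p z)) p
      = map_pmf (\<lambda>z. (snd z, (\<lambda>y. gk_conn p `` {Inr y}) (snd z))) p"
    by (intro map_pmf_cong refl) (simp add: gk_K_eq_component_of_snd)
  then show ?thesis
    using ent_map_pmf_graph[OF assms] by (simp add: H_Y_given_K_def H_Y_def)
qed

definition fed_sources :: "'v \<Rightarrow> 'v \<Rightarrow> 'v exnode set \<Rightarrow> 'v set" where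
  "fed_sources sx sy S =
     (if SrcX' \<in> S \<or> SrcK \<in> S then {sx} else {}) \<union> (if SrcY' \<in> S \<or> SrcK \<in> S then {sy} else {})"

lemma mincut_fed_sources_le_ex_mincut:
  assumes "finite V" "S \<subseteq> {SrcX', SrcY', SrcK}" "sx \<in> V" "sy \<in> V"
  shows "mincut V (ecap cap) (fed_sources sx sy S) t
           \<le> mincut (ex_nodes V) (ex_cap cap sx sy) S (Orig t)"
  unfolding mincut_def[of "ex_nodes V"]
proof (intro INF_greatest, clarify)
  fix C assume SC: "S \<subseteq> C" and CV: "C \<subseteq> ex_nodes V" and tC: "Orig t \<notin> C"
  have finex: "finite (ex_nodes V)" using assms(1) by (simp add: ex_nodes_def)
  have finC: "finite C" using finite_subset[OF CV finex] .
  define C' where "C' = {v\<in>V. Orig v \<in> C}"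
  show "mincut V (ecap cap) (fed_sources sx sy S) t \<le> cut_value (ex_nodes V) (ex_cap cap sx sy) C"
  proof (cases "fed_sources sx sy S \<subseteq> C'")
    case True
    have "mincut V (ecap cap) (fed_sources sx sy S) t \<le> cut_value V (ecap cap) C'"
      unfolding mincut_def using True tC by (intro INF_lower) (auto simp: C'_def)
    also have "\<dots> = (\<Sum>u\<in>Orig ` C'. \<Sum>w\<in>Orig ` (V - C'). ex_cap cap sx sy u w)"
      unfolding cut_value_def by (simp add: sum.reindex inj_on_def)
    also have "\<dots> \<le> (\<Sum>u\<in>Orig ` C'. \<Sum>w\<in>ex_nodes V - C. ex_cap cap sx sy u w)"
      using finex by (intro sum_mono sum_mono2) (auto simp: C'_def ex_nodes_def)
    also have "\<dots> \<le> (\<Sum>u\<in>C. \<Sum>w\<in>ex_nodes V - C. ex_cap cap sx sy u w)"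
      by (intro sum_mono2 finC) (auto simp: C'_def)
    finally show ?thesis unfolding cut_value_def .
  next
    case False
    then obtain a where a: "a \<in> fed_sources sx sy S" "a \<notin> C'" by auto
    have aV: "a \<in> V" using a(1) assms(3,4) by (auto simp: fed_sources_def split: if_splits)
    obtain s where sS: "s \<in> S" and inf: "ex_cap cap sx sy s (Orig a) = \<infinity>"
      using a(1) assms(2) by (auto simp: fed_sources_def split: if_splits)
    have "ex_cap cap sx sy s (Orig a) \<le> (\<Sum>w\<in>ex_nodes V - C. ex_cap cap sx sy s w)"
      using a(2) aV finex by (intro member_le_sum) (auto simp: ex_nodes_def C'_def)
    also have "\<dots> \<le> (\<Sum>u\<in>C. \<Sum>w\<in>ex_nodes V - C. ex_cap cap sx sy u w)"
      using sS SC finC by (intro member_le_sum) auto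
    finally have "cut_value (ex_nodes V) (ex_cap cap sx sy) C = \<infinity>"
      using inf unfolding cut_value_def by (simp add: top_unique)
    then show ?thesis by simp
  qed
qed

lemma rho_fed_sources_le_ex_rho:
  assumes "finite V" "S \<subseteq> {SrcX', SrcY', SrcK}" "sx \<in> V" "sy \<in> V"
  shows "rho V (ecap cap) T (fed_sources sx sy S) \<le> rho (ex_nodes V) (ex_cap cap sx sy) (Orig ` T) S"
  unfolding rho_def by (intro INF_mono) (auto intro: mincut_fed_sources_le_ex_mincut[OF assms])

lemma decomp_source_set_cases:
  assumes "S \<subseteq> {SrcX', SrcY', SrcK}" "S \<noteq> {}"
  obtains "S = {SrcX'}" | "S = {SrcY'}" | "fed_sources sx sy S = {sx, sy}"
proof -
  consider "SrcX' \<in> S \<or> SrcK \<in> S" "SrcY' \<in> S \<or> SrcK \<in> S"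
    | "S \<subseteq> {SrcY'}" | "S \<subseteq> {SrcX'}"
    using assms(1) by blast
  then show ?thesis
  proof cases
    case 1
    then have "fed_sources sx sy S = {sx, sy}" by (simp add: fed_sources_def insert_commute)
    then show ?thesis by (rule that(3))
  qed (use assms(2) that(1,2) in \<open>auto simp: subset_singleton_iff\<close>)
qed

lemma decomp_rate_sum_le_rho_fed_sources:
  fixes S :: "'v exnode set"
  assumes fin: "finite (set_pmf p)" and common: "H_K p = mutual_info p"
    and feas: "multicast_feasible V cap T sx sy p"
    and S: "S \<subseteq> {SrcX', SrcY', SrcK}" "S \<noteq> {}"
  shows "ennreal (\<Sum>s\<in>S. decomp_rate p s) \<le> rho V (ecap cap) T (fed_sources sx sy S)"
proof -
  have X': "H_X_given_K p = H_X_given_Y p" and Y': "H_Y_given_K p = H_Y_given_X p"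
    using common H_X_given_K_eq[OF fin] H_Y_given_K_eq[OF fin]
    by (simp_all add: H_X_given_Y_def H_Y_given_X_def mutual_info_def)
  from S show ?thesis
  proof (cases rule: decomp_source_set_cases[where sx = sx and sy = sy])
    case 1
    then show ?thesis using feas X' by (simp add: multicast_feasible_def decomp_rate_def fed_sources_def)
  next
    case 2
    then show ?thesis using feas Y' by (simp add: multicast_feasible_def decomp_rate_def fed_sources_def)
  next
    case 3
    have "H_X_given_Y p \<ge> 0" "H_Y_given_X p \<ge> 0"
      using ent_map_pmf_le[OF fin, of snd] ent_map_pmf_le[OF fin, of fst]
      by (simp_all add: H_X_given_Y_def H_Y_given_X_def H_XY_def H_X_def H_Y_def)
    then have nonneg: "decomp_rate p s \<ge> 0" if "s \<in> {SrcX', SrcY', SrcK}" for s :: "'v exnode"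
      using that X' Y' by (auto simp: decomp_rate_def H_K_def ent_nonneg)
    have "(\<Sum>s\<in>S. decomp_rate p s) \<le> (\<Sum>s\<in>{SrcX', SrcY', SrcK :: 'v exnode}. decomp_rate p s)"
      using S nonneg by (intro sum_mono2) auto
    also have "\<dots> = H_XY p"
      using X' Y' common by (simp add: decomp_rate_def H_X_given_Y_def H_Y_given_X_def mutual_info_def)
    finally show ?thesis
      using feas 3 by (auto simp: multicast_feasible_def intro: order_trans[OF ennreal_leI])
  qed
qed

theorem corollary2:
  fixes V :: "'v set" and cap :: "'v \<Rightarrow> 'v \<Rightarrow> nat" and T :: "'v set"
    and sx sy :: 'v and p :: "('a \<times> 'b) pmf"
  assumes "finite V" and "acyclic_network V cap"
    and "sx \<in> V" and "sy \<in> V" and "sx \<noteq> sy"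
    and "T \<subseteq> V" and "T \<noteq> {}"
    and "finite (set_pmf p)"
    and "H_K p = mutual_info p"
    and "multicast_feasible V cap T sx sy p"
  shows "feasible_by_source_decomposition V cap T sx sy p"
  unfolding feasible_by_source_decomposition_def
proof (intro allI impI, elim conjE)
  fix S :: "'v exnode set" assume S: "S \<subseteq> {SrcX', SrcY', SrcK}" "S \<noteq> {}"
  have "ennreal (\<Sum>s\<in>S. decomp_rate p s) \<le> rho V (ecap cap) T (fed_sources sx sy S)"
    using decomp_rate_sum_le_rho_fed_sources[OF assms(8-10) S] .
  also have "\<dots> \<le> rho (ex_nodes V) (ex_cap cap sx sy) (Orig ` T) S"
    using rho_fed_sources_le_ex_rho[OF assms(1) S(1) assms(3,4)] .
  finally show "ennreal (\<Sum>s\<in>S. decomp_rate p s) \<le> rho (ex_nodes V) (ex_cap cap sx sy) (Orig ` T) S" .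
qed

end
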